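(* Let $\mathcal{L}=(\mathrm{Fm},\vdash)$ be a selfextensional logic for which property $\neg_A$ holds, let $N\subseteq\mathrm{Fm}\times\mathrm{Fm}$ be a normative system, (R) any rule, and $P\subseteq\mathrm{Fm}\times\mathrm{Fm}$ any permission system. Then $S^{(\mathrm{R})}(P,N)\subseteq_c D^{(\mathrm{R})}(P,N)$.
   Context: $Cn(\Gamma)=\{\psi\mid\Gamma\vdash\psi\}$, $Cn(\alpha)=Cn(\{\alpha\})$, $Cn(\varphi,\psi)=Cn(\{\varphi,\psi\})$. $\neg_W$: a unary term $\neg$ such that $\psi\in Cn(\varphi)$ implies $\neg\varphi\in Cn(\neg\psi)$; $\neg_A$ (for such $\neg$): $Cn(\varphi,\neg\varphi)=\mathrm{Fm}$ for all $\varphi$. For a rule (R) on relations $\subseteq\mathrm{Fm}\times\mathrm{Fm}$, $N^{(\mathrm{R})}$ is the smallest extension of $N$ closed under (R) and $N^{(\mathrm{R})}_{(\alpha,\varphi)}$ the smallest extension of $N\cup\{(\alpha,\varphi)\}$ closed under (R). $S^{(\mathrm{R})}(P,N)=\bigcup\{N^{(\mathrm{R})}_{(\alpha,\varphi)}\mid(\alpha,\varphi)\in P\}$ if $P\neq\varnothing$, and $N^{(\mathrm{R})}$ otherwise. Dynamic positive permission: $D^{(\mathrm{R})}(P,N)=\{(\alpha,\varphi)\mid\exists\gamma\exists\psi\exists\varphi'\exists\psi'(Cn(\gamma)\neq\mathrm{Fm}\ \&\ (\gamma,\psi)\in S^{(\mathrm{R})}(P,N)\ \&\ Cn(\psi,\psi')=\mathrm{Fm}=Cn(\varphi,\varphi')\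 \&\ (\gamma,\psi')\in N^{(\mathrm{R})}_{(\alpha,\varphi')})\}$. $M\subseteq_c M'$ means: $(\alpha,\varphi)\in M$ and $Cn(\alpha)\neq\mathrm{Fm}$ imply $(\alpha,\varphi)\in M'$. *)

theory Defs
  imports Main
begin

datatype ('c, 'v) fm = Var 'v | Op 'c "('c, 'v) fm list"

fun subst :: "('v \<Rightarrow> ('c, 'v) fm) \<Rightarrow> ('c, 'v) fm \<Rightarrow> ('c, 'v) fm" where
  "subst \<sigma> (Var v) = \<sigma> v"
| "subst \<sigma> (Op c xs) = Op c (map (subst \<sigma>) xs)"

type_synonym ('c, 'v) cr = "('c, 'v) fm set \<Rightarrow> ('c, 'v) fm \<Rightarrow> bool"

definition logic :: "('c, 'v) cr \<Rightarrow> bool" where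
  "logic vd \<longleftrightarrow>
     (\<forall>\<Gamma> \<phi>. \<phi> \<in> \<Gamma> \<longrightarrow> vd \<Gamma> \<phi>)
   \<and> (\<forall>\<Gamma> \<Delta> \<phi>. vd \<Gamma> \<phi> \<and> \<Gamma> \<subseteq> \<Delta> \<longrightarrow> vd \<Delta> \<phi>)
   \<and> (\<forall>\<Gamma> \<Delta> \<phi>. (\<forall>\<psi>\<in>\<Delta>. vd \<Gamma> \<psi>) \<and> vd (\<Gamma> \<union> \<Delta>) \<phi> \<longrightarrow> vd \<Gamma> \<phi>)
   \<and> (\<forall>\<Gamma> \<phi> \<sigma>. vd \<Gamma> \<phi> \<longrightarrow> vd (subst \<sigma> ` \<Gamma>) (subst \<sigma> \<phi>))"

definition Cn :: "('c, 'v) cr \<Rightarrow> ('c, 'v) fm set \<Rightarrow> ('c, 'v) fm set" where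
  "Cn vd \<Gamma> = {\<psi>. vd \<Gamma> \<psi>}"

definition selfextensional :: "('c, 'v) cr \<Rightarrow> bool" where
  "selfextensional vd \<longleftrightarrow>
     (\<forall>c xs ys. length xs = length ys
        \<and> (\<forall>i<length xs. Cn vd {xs ! i} = Cn vd {ys ! i})
        \<longrightarrow> Cn vd {Op c xs} = Cn vd {Op c ys})"

text \<open>A unary term, given by a term t whose variables are all identified: t(\<phi>).\<close>
definition app1 :: "('c, 'v) fm \<Rightarrow> ('c, 'v) fm \<Rightarrow> ('c, 'v) fm" where
  "app1 t \<phi> = subst (\<lambda>_. \<phi>) t"

definition neg_W :: "('c, 'v) cr \<Rightarrow> ('c, 'v) fm \<Rightarrow> bool" where
  "neg_W vd t \<longleftrightarrow> (\<forall>\<phi> \<psi>. \<psi> \<in> Cn vd {\<phi>} \<longrightarrow> app1 t \<phi> \<in> Cn vd {app1 t \<psi>})"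

definition neg_A :: "('c, 'v) cr \<Rightarrow> ('c, 'v) fm \<Rightarrow> bool" where
  "neg_A vd t \<longleftrightarrow> (\<forall>\<phi>. Cn vd {\<phi>, app1 t \<phi>} = UNIV)"

text \<open>A rule on relations, given by its instances (premise set, conclusion).\<close>
type_synonym 'a rule = "(('a \<times> 'a) set \<times> ('a \<times> 'a)) set"

definition closed_under :: "'a rule \<Rightarrow> ('a \<times> 'a) set \<Rightarrow> bool" where
  "closed_under R M \<longleftrightarrow> (\<forall>(Ps, c)\<in>R. Ps \<subseteq> M \<longrightarrow> c \<in> M)"

definition closure :: "'a rule \<Rightarrow> ('a \<times> 'a) set \<Rightarrow> ('a \<times> 'a) set" where
  "closure R M = \<Inter>{M'. M \<subseteq> M' \<and> closed_under R M'}"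

definition S_op :: "'a rule \<Rightarrow> ('a \<times> 'a) set \<Rightarrow> ('a \<times> 'a) set \<Rightarrow> ('a \<times> 'a) set" where
  "S_op R P N = (if P \<noteq> {} then (\<Union>x\<in>P. closure R (insert x N)) else closure R N)"

definition D_op :: "('c, 'v) cr \<Rightarrow> ('c, 'v) fm rule \<Rightarrow> (('c, 'v) fm \<times> ('c, 'v) fm) set
     \<Rightarrow> (('c, 'v) fm \<times> ('c, 'v) fm) set \<Rightarrow> (('c, 'v) fm \<times> ('c, 'v) fm) set" where
  "D_op vd R P N = {(\<alpha>, \<phi>). \<exists>\<gamma> \<psi> \<phi>' \<psi>'. Cn vd {\<gamma>} \<noteq> UNIV \<and> (\<gamma>, \<psi>) \<in> S_op R P N
      \<and> Cn vd {\<psi>, \<psi>'} = UNIV \<and> Cn vd {\<phi>, \<phi>'} = UNIV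
      \<and> (\<gamma>, \<psi>') \<in> closure R (insert (\<alpha>, \<phi>') N)}"

definition subc :: "('c, 'v) cr \<Rightarrow> (('c, 'v) fm \<times> ('c, 'v) fm) set
     \<Rightarrow> (('c, 'v) fm \<times> ('c, 'v) fm) set \<Rightarrow> bool" where
  "subc vd M M' \<longleftrightarrow> (\<forall>\<alpha> \<phi>. (\<alpha>, \<phi>) \<in> M \<and> Cn vd {\<alpha>} \<noteq> UNIV \<longrightarrow> (\<alpha>, \<phi>) \<in> M')"

end

theory Submission
  imports Defs
begin

text \<open>Every pair of S(P, N) with a consistent antecedent \<alpha> is witnessed in D(P, N) by itself:
  take \<gamma> = \<alpha> and \<psi> = \<phi>, and for both \<phi>' and \<psi>' a formula inconsistent with \<phi>, e.g. \<not>\<phi> by property neg_A.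
  Then (\<gamma>, \<psi>') = (\<alpha>, \<phi>') is the very pair that generates the closure of N \<union> {(\<alpha>, \<phi>')}.\<close>

lemma subset_closure: "M \<subseteq> closure R M"
  unfolding closure_def by blast

lemma D_opI_self:
  assumes "Cn vd {\<alpha>} \<noteq> UNIV" and "(\<alpha>, \<phi>) \<in> S_op R P N" and "Cn vd {\<phi>, \<phi>'} = UNIV"
  shows "(\<alpha>, \<phi>) \<in> D_op vd R P N"
proof -
  have "(\<alpha>, \<phi>') \<in> closure R (insert (\<alpha>, \<phi>') N)"
    using subset_closure by blast
  with assms show ?thesis
    unfolding D_op_def by blast
qed

lemma subc_S_op_D_op:
  assumes "\<And>\<phi>. \<exists>\<phi>'. Cn vd {\<phi>, \<phi>'} = UNIV"
  shows "subc vd (S_op R P N) (D_op vd R P N)"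
  unfolding subc_def using assms D_opI_self by blast

theorem lemma4p16:
  fixes vd :: "('c, 'v) cr" and neg :: "('c, 'v) fm"
    and R :: "('c, 'v) fm rule" and N P :: "(('c, 'v) fm \<times> ('c, 'v) fm) set"
  assumes "logic vd" and "selfextensional vd"
    and "neg_W vd neg" and "neg_A vd neg"
  shows "subc vd (S_op R P N) (D_op vd R P N)"
proof (rule subc_S_op_D_op)
  fix \<phi>
  show "\<exists>\<phi>'. Cn vd {\<phi>, \<phi>'} = UNIV"
    using \<open>neg_A vd neg\<close> unfolding neg_A_def by blast
qed

end
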